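(* Let $X\subset\mathbb{R}^n$ be nonempty convex compact with $\|x_1-x_2\|_2\le D_X$, $c\in(0,1]$, $f(x)=\mathbb{E}[F(x,\xi)]$ $L_f$-Lipschitz on $X$, with oracle samples satisfying $\mathbb{E}\|F'(x,\xi)-f'(x)\|_2^2\le\sigma_f^2$ and $\mathbb{E}[(F(x,\xi)-f(x))^2]\le\beta^2$. Let $\delta>0$ and let $Y_\delta\subset\mathbb{R}$ be an interval of length $2(L_fD_X+\delta)$ such that $f(x)\in Y_\delta$ for all $x\in X$; let $\Lambda=[0,1]$. For $z>0$ define $\mathcal{L}'_x=\frac{2c}{z}(F(x,\xi)-y)_+F'(x,\xi)+\lambda F'(x,\xi)$, $\mathcal{L}'_y=-\frac{2c}{z}(F(x,\xi)-y)_++1-\lambda$, $\mathcal{L}'_z=-\frac c{z^2}(F(x,\xi)-y)_+^2+\frac c4$, $\mathcal{L}'_\lambda=F(x,\xi)-y$. Then for any $x\in X$, $y\in Y_\delta$, $z>0$, $\lambda\in\Lambda$: (a) $\mathbb{E}[(\mathcal{L}'_y)^2]\le\frac{12c^2}{z^2}[\beta^2+4(L_fD_X+\delta)^2]+3$; (b) $\mathbb{E}[(\mathcal{L}'_\lambda)^2]\le2\beta^2+8(L_fD_X+\delta)^2$; if moreover $\mathbb{E}[(F(x,\xi)-f(x))_+^4]\le M_f^4$ for all $x\in X$, then (d) $\mathbb{E}[(\mathcal{L}'_z)^2]\le\frac{12c^2}{z^4}[M_f^4+16(L_fD_X+\delta)^4]+\frac{3c^2}{16}$; and if, with $G(x,\xi)=(F(x,\xi)-f(x))_+^2$,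 $\mathbb{E}\|G'(x,\xi)\|_2^2\le L_G^2$ for all $x\in X$, then (c) $\mathbb{E}\|\mathcal{L}'_x\|_2^2\le\frac{3c^2}{z^2}[L_G^2+4L_f^2\beta^2+64(L_f^2+\sigma_f^2)(L_fD_X+\delta)^2]+12(L_f^2+\sigma_f^2)$.
   Context: $(a)_+=\max\{a,0\}$. $F(\cdot,\xi)$ is convex; $F'(x,\xi)$ is a stochastic subgradient returned by an oracle, unbiased for a subgradient $f'(x)$ of $f$; $F(x,\xi)$ is unbiased for $f(x)$.
   Formalization: The subgradient f'(x) has norm at most $L_f$ for every x in X, and $G'(x,\xi)$ in (c) is $2(F(x,\xi)-f(x))_+(F'(x,\xi)-f'(x))$. The paper assumes this as well. *)

theory Defs
  imports "HOL-Probability.Probability"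
begin

definition pos_part :: "real \<Rightarrow> real" where
  "pos_part a = max a 0"

text \<open>Stochastic partial derivatives of the Lagrangian, as in the paper.
  Fx = F(x,xi), Fx' = F'(x,xi).\<close>
definition Lx' :: "real \<Rightarrow> real \<Rightarrow> real \<Rightarrow> real \<Rightarrow> real \<Rightarrow> 'v::real_vector \<Rightarrow> 'v" where
  "Lx' c y z lam Fx Fx' = (2 * c / z * pos_part (Fx - y)) *\<^sub>R Fx' + lam *\<^sub>R Fx'"

definition Ly' :: "real \<Rightarrow> real \<Rightarrow> real \<Rightarrow> real \<Rightarrow> real \<Rightarrow> real" where
  "Ly' c y z lam Fx = - (2 * c / z) * pos_part (Fx - y) + 1 - lam"

definition Lz' :: "real \<Rightarrow> real \<Rightarrow> real \<Rightarrow> real \<Rightarrow> real" where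
  "Lz' c y z Fx = - (c / z^2) * (pos_part (Fx - y))^2 + c / 4"

definition Llam' :: "real \<Rightarrow> real \<Rightarrow> real" where
  "Llam' y Fx = Fx - y"

text \<open>Stochastic (sub)gradient of G(x,xi) = (F(x,xi) - f(x))_+^2 by the chain rule:
  G'(x,xi) = 2 (F(x,xi) - f(x))_+ (F'(x,xi) - f'(x)).\<close>
definition Gprime :: "real \<Rightarrow> real \<Rightarrow> 'v::real_vector \<Rightarrow> 'v \<Rightarrow> 'v" where
  "Gprime Fx fx Fx' fx' = (2 * pos_part (Fx - fx)) *\<^sub>R (Fx' - fx')"

end

(* All four bounds are pointwise estimates followed by taking expectations. Since f x and y lie in
   the same interval of length r = 2 (L_f D_X + delta), one has (F - y)_+ <= (F - f x)_+ + r, and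
   norm F' <= norm (F' - f' x) + L_f. Substituting these into each derivative and expanding squares
   with (a_1 + ... + a_k)^2 <= k (a_1^2 + ... + a_k^2) bounds its square by a nonnegative combination
   of (F - f x)^2, (F - f x)_+^4, norm G'^2 and norm (F' - f' x)^2 plus a constant, and the moment
   hypotheses bound the expectation of each term. *)

theory Submission
  imports Defs
begin

lemma square_add_le: "((a::real) + b)\<^sup>2 \<le> 2 * (a\<^sup>2 + b\<^sup>2)"
proof -
  have "0 \<le> (a - b)\<^sup>2" by simp
  then show ?thesis by (simp add: power2_eq_square algebra_simps)
qed

lemma square_add3_le: "((a::real) + b + c)\<^sup>2 \<le> 3 * (a\<^sup>2 + b\<^sup>2 + c\<^sup>2)"
proof -
  have "0 \<le> (a - b)\<^sup>2 + (b - c)\<^sup>2 + (a - c)\<^sup>2" by simp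
  then show ?thesis by (simp add: power2_eq_square algebra_simps)
qed

lemma square_diff_le:
  assumes "0 \<le> (a::real)" "0 \<le> b"
  shows "(a - b)\<^sup>2 \<le> a\<^sup>2 + b\<^sup>2"
  using assms by (simp add: power2_eq_square algebra_simps)

lemma power4_add_le: "((a::real) + b) ^ 4 \<le> 8 * (a ^ 4 + b ^ 4)"
proof -
  have "(a + b) ^ 4 = ((a + b)\<^sup>2)\<^sup>2" by simp
  also have "\<dots> \<le> (2 * (a\<^sup>2 + b\<^sup>2))\<^sup>2"
    by (intro power_mono square_add_le) simp
  also have "\<dots> = 4 * (a\<^sup>2 + b\<^sup>2)\<^sup>2"
    by (simp only: power_mult_distrib) simp
  also have "\<dots> \<le> 8 * (a ^ 4 + b ^ 4)"
    using square_add_le[of "a\<^sup>2" "b\<^sup>2"] by (simp flip: power_mult)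
  finally show ?thesis .
qed

lemma pos_part_nonneg: "0 \<le> pos_part a"
  by (simp add: pos_part_def)

lemma pos_part_le_abs: "pos_part a \<le> \<bar>a\<bar>"
  by (simp add: pos_part_def)

lemma pos_part_square_le: "(pos_part a)\<^sup>2 \<le> a\<^sup>2"
  by (metis abs_le_square_iff abs_of_nonneg pos_part_le_abs pos_part_nonneg)

lemma pos_part_sub_le: "\<bar>v - y\<bar> \<le> r \<Longrightarrow> pos_part (u - y) \<le> pos_part (u - v) + r"
  by (simp add: pos_part_def)

lemma Llam'_sq_le:
  assumes "\<bar>v - y\<bar> \<le> r"
  shows "(Llam' y u)\<^sup>2 \<le> 2 * ((u - v)\<^sup>2 + r\<^sup>2)"
proof -
  have "(Llam' y u)\<^sup>2 = ((u - v) + (v - y))\<^sup>2" by (simp add: Llam'_def)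
  also have "\<dots> \<le> 2 * ((u - v)\<^sup>2 + (v - y)\<^sup>2)" by (rule square_add_le)
  also have "(v - y)\<^sup>2 \<le> r\<^sup>2" using assms by (metis abs_le_square_iff abs_of_nonneg abs_ge_zero order_trans)
  finally show ?thesis by simp
qed

lemma Ly'_sq_le:
  assumes "0 \<le> c" "0 < z" "lam \<in> {0..1}" "\<bar>v - y\<bar> \<le> r"
  shows "(Ly' c y z lam u)\<^sup>2 \<le> 12 * c\<^sup>2 / z\<^sup>2 * ((u - v)\<^sup>2 + r\<^sup>2) + 3"
proof -
  define t where "t = 2 * c / z"
  have t: "0 \<le> t" using assms by (simp add: t_def)
  have P: "pos_part (u - y) \<le> \<bar>u - v\<bar> + r"
    using pos_part_sub_le[OF assms(4), of u] pos_part_le_abs[of "u - v"] by linarith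
  have "(Ly' c y z lam u)\<^sup>2 = (t * pos_part (u - y) - (1 - lam))\<^sup>2"
    by (simp add: Ly'_def t_def power2_commute algebra_simps)
  also have "\<dots> \<le> (t * pos_part (u - y))\<^sup>2 + (1 - lam)\<^sup>2"
    using t assms(3) by (intro square_diff_le) (auto simp: pos_part_nonneg)
  also have "(1 - lam)\<^sup>2 \<le> 1"
    using assms(3) by (simp add: power_le_one)
  also have "(t * pos_part (u - y))\<^sup>2 \<le> (t * (\<bar>u - v\<bar> + r))\<^sup>2"
    using t P by (intro power_mono mult_left_mono) (auto simp: pos_part_nonneg)
  also have "\<dots> = t\<^sup>2 * (\<bar>u - v\<bar> + r)\<^sup>2"
    by (simp add: power_mult_distrib)
  also have "\<dots> \<le> t\<^sup>2 * (2 * ((u - v)\<^sup>2 + r\<^sup>2))"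
    using square_add_le[of "\<bar>u - v\<bar>" r] by (intro mult_left_mono) simp_all
  also have "\<dots> + 1 \<le> t\<^sup>2 * (3 * ((u - v)\<^sup>2 + r\<^sup>2)) + 3"
    by (intro add_mono mult_left_mono) auto
  also have "t\<^sup>2 * (3 * ((u - v)\<^sup>2 + r\<^sup>2)) = 12 * c\<^sup>2 / z\<^sup>2 * ((u - v)\<^sup>2 + r\<^sup>2)"
    by (simp add: t_def power_mult_distrib power_divide)
  finally show ?thesis by simp
qed

lemma Lz'_sq_le:
  assumes "0 \<le> c" "\<bar>v - y\<bar> \<le> r"
  shows "(Lz' c y z u)\<^sup>2 \<le> 12 * c\<^sup>2 / z ^ 4 * (pos_part (u - v) ^ 4 + r ^ 4) + 3 * c\<^sup>2 / 16"
proof -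
  define k where "k = c / z\<^sup>2"
  let ?p = "pos_part (u - y)" and ?q = "pos_part (u - v)"
  have "?p ^ 4 \<le> (?q + r) ^ 4"
    using pos_part_sub_le[OF assms(2), of u] by (intro power_mono) (auto simp: pos_part_nonneg)
  also have "\<dots> \<le> 8 * (?q ^ 4 + r ^ 4)" by (rule power4_add_le)
  finally have p4: "?p ^ 4 \<le> 8 * (?q ^ 4 + r ^ 4)" .
  have "(Lz' c y z u)\<^sup>2 = (k * ?p\<^sup>2 - c / 4)\<^sup>2"
    by (simp add: Lz'_def k_def power2_commute algebra_simps)
  also have "\<dots> \<le> (k * ?p\<^sup>2)\<^sup>2 + (c / 4)\<^sup>2"
    using assms(1) by (intro square_diff_le) (auto simp: k_def)
  also have "\<dots> = k\<^sup>2 * ?p ^ 4 + c\<^sup>2 / 16"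
    by (simp add: power_mult_distrib power_divide flip: power_mult)
  also have "\<dots> \<le> k\<^sup>2 * (8 * (?q ^ 4 + r ^ 4)) + c\<^sup>2 / 16"
    using p4 by (intro add_mono mult_left_mono) simp_all
  also have "\<dots> \<le> k\<^sup>2 * (12 * (?q ^ 4 + r ^ 4)) + 3 * c\<^sup>2 / 16"
    by (intro add_mono mult_left_mono) (auto simp: pos_part_nonneg)
  also have "k\<^sup>2 * (12 * (?q ^ 4 + r ^ 4)) = 12 * c\<^sup>2 / z ^ 4 * (?q ^ 4 + r ^ 4)"
    by (simp add: k_def power_divide flip: power_mult)
  finally show ?thesis .
qed

lemma Lx'_norm_sq_le:
  fixes W w :: "'v::real_normed_vector"
  assumes "0 \<le> c" "0 < z" "lam \<in> {0..1}" "\<bar>v - y\<bar> \<le> r" "norm w \<le> L"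
  shows "(norm (Lx' c y z lam u W))\<^sup>2
    \<le> 3 * c\<^sup>2 / z\<^sup>2 * ((norm (Gprime u v W w))\<^sup>2 + 4 * L\<^sup>2 * (u - v)\<^sup>2
                        + 16 * r\<^sup>2 * ((norm (W - w))\<^sup>2 + L\<^sup>2))
      + 12 * ((norm (W - w))\<^sup>2 + L\<^sup>2)"
proof -
  define t where "t = 2 * c / z"
  let ?p = "pos_part (u - y)" and ?q = "pos_part (u - v)" and ?e = "norm (W - w)"
  have t: "0 \<le> t" using assms by (simp add: t_def)
  have r: "0 \<le> r" using assms(4) by linarith
  have L: "0 \<le> L" using assms(5) norm_ge_zero order_trans by blast
  have G: "norm (Gprime u v W w) = 2 * ?q * ?e" by (simp add: Gprime_def pos_part_nonneg)
  have "0 \<le> t * ?p + lam" using t assms(3) by (simp add: pos_part_nonneg)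
  then have "norm (Lx' c y z lam u W) = (t * ?p + lam) * norm W"
    by (simp add: Lx'_def t_def flip: scaleR_add_left)
  also have "\<dots> \<le> (t * (?q + r) + 1) * (?e + L)"
  proof (intro mult_mono add_mono mult_left_mono)
    show "?p \<le> ?q + r" using assms(4) by (rule pos_part_sub_le)
    show "norm W \<le> ?e + L" using norm_triangle_ineq[of "W - w" w] assms(5) by simp
  qed (use t r L assms(3) in \<open>auto simp: pos_part_nonneg\<close>)
  also have "\<dots> = t * ?q * ?e + t * ?q * L + (t * r + 1) * (?e + L)"
    by (simp add: algebra_simps)
  finally have "(norm (Lx' c y z lam u W))\<^sup>2 \<le> (t * ?q * ?e + t * ?q * L + (t * r + 1) * (?e + L))\<^sup>2"
    by (intro power_mono) simp_all
  also have "\<dots> \<le> 3 * ((t * ?q * ?e)\<^sup>2 + (t * ?q * L)\<^sup>2 + ((t * r + 1) * (?e + L))\<^sup>2)"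
    by (rule square_add3_le)
  also have "\<dots> \<le> 3 * ((t * ?q * ?e)\<^sup>2 + t\<^sup>2 * L\<^sup>2 * (u - v)\<^sup>2 + 4 * ((t * r)\<^sup>2 + 1) * (?e\<^sup>2 + L\<^sup>2))"
  proof -
    have "(t * ?q * L)\<^sup>2 = t\<^sup>2 * L\<^sup>2 * ?q\<^sup>2" by (simp add: power_mult_distrib)
    also have "\<dots> \<le> t\<^sup>2 * L\<^sup>2 * (u - v)\<^sup>2" by (intro mult_left_mono pos_part_square_le) simp
    finally have "(t * ?q * L)\<^sup>2 \<le> t\<^sup>2 * L\<^sup>2 * (u - v)\<^sup>2" .
    moreover have "((t * r + 1) * (?e + L))\<^sup>2 \<le> 4 * ((t * r)\<^sup>2 + 1) * (?e\<^sup>2 + L\<^sup>2)"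
    proof -
      have "((t * r + 1) * (?e + L))\<^sup>2 = (t * r + 1)\<^sup>2 * (?e + L)\<^sup>2"
        by (rule power_mult_distrib)
      also have "\<dots> \<le> (2 * ((t * r)\<^sup>2 + 1\<^sup>2)) * (2 * (?e\<^sup>2 + L\<^sup>2))"
        by (intro mult_mono square_add_le) auto
      also have "\<dots> = 4 * ((t * r)\<^sup>2 + 1) * (?e\<^sup>2 + L\<^sup>2)"
        by (simp add: algebra_simps)
      finally show ?thesis .
    qed
    ultimately show ?thesis by simp
  qed
  also have "\<dots> = 3 * c\<^sup>2 / z\<^sup>2 * ((norm (Gprime u v W w))\<^sup>2 + 4 * L\<^sup>2 * (u - v)\<^sup>2
                        + 16 * r\<^sup>2 * (?e\<^sup>2 + L\<^sup>2)) + 12 * (?e\<^sup>2 + L\<^sup>2)"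
    by (simp add: G t_def power_mult_distrib power_divide add_divide_distrib algebra_simps)
  finally show ?thesis .
qed

lemma nn_integral_le_lincomb:
  fixes g :: "'i \<Rightarrow> 'a \<Rightarrow> real"
  assumes M: "prob_space M" and I: "finite I"
    and g_meas: "\<And>i. i \<in> I \<Longrightarrow> g i \<in> borel_measurable M"
    and g_nonneg: "\<And>i \<xi>. i \<in> I \<Longrightarrow> \<xi> \<in> space M \<Longrightarrow> 0 \<le> g i \<xi>"
    and g_bound: "\<And>i. i \<in> I \<Longrightarrow> (\<integral>\<^sup>+\<xi>. ennreal (g i \<xi>) \<partial>M) \<le> ennreal (b i)"
    and A: "\<And>i. i \<in> I \<Longrightarrow> 0 \<le> A i" and b: "\<And>i. i \<in> I \<Longrightarrow> 0 \<le> b i" and B: "0 \<le> B"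
    and h: "\<And>\<xi>. \<xi> \<in> space M \<Longrightarrow> h \<xi> \<le> (\<Sum>i\<in>I. A i * g i \<xi>) + B"
  shows "(\<integral>\<^sup>+\<xi>. ennreal (h \<xi>) \<partial>M) \<le> ennreal ((\<Sum>i\<in>I. A i * b i) + B)"
proof -
  have "(\<integral>\<^sup>+\<xi>. ennreal (h \<xi>) \<partial>M)
      \<le> (\<integral>\<^sup>+\<xi>. (\<Sum>i\<in>I. ennreal (A i) * ennreal (g i \<xi>)) + ennreal B \<partial>M)"
  proof (rule nn_integral_mono)
    fix \<xi> assume \<xi>: "\<xi> \<in> space M"
    then have "ennreal (h \<xi>) \<le> ennreal ((\<Sum>i\<in>I. A i * g i \<xi>) + B)"
      using h by (intro ennreal_leI) simp
    also have "\<dots> = (\<Sum>i\<in>I. ennreal (A i) * ennreal (g i \<xi>)) + ennreal B"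
      using A g_nonneg[OF _ \<xi>] B by (simp add: ennreal_mult sum_nonneg flip: sum_ennreal)
    finally show "ennreal (h \<xi>) \<le> (\<Sum>i\<in>I. ennreal (A i) * ennreal (g i \<xi>)) + ennreal B" .
  qed
  also have "\<dots> = (\<Sum>i\<in>I. ennreal (A i) * (\<integral>\<^sup>+\<xi>. ennreal (g i \<xi>) \<partial>M)) + ennreal B"
    using g_meas prob_space.emeasure_space_1[OF M]
    by (simp add: nn_integral_add nn_integral_sum nn_integral_cmult)
  also have "\<dots> \<le> (\<Sum>i\<in>I. ennreal (A i) * ennreal (b i)) + ennreal B"
    using g_bound by (intro add_mono sum_mono mult_left_mono) auto
  also have "\<dots> = ennreal ((\<Sum>i\<in>I. A i * b i) + B)"
    using A b B by (simp add: ennreal_mult sum_nonneg flip: sum_ennreal)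
  finally show ?thesis .
qed

lemma nn_integral_le_affine:
  assumes "prob_space M" "g \<in> borel_measurable M" "\<And>\<xi>. \<xi> \<in> space M \<Longrightarrow> 0 \<le> g \<xi>"
    and "(\<integral>\<^sup>+\<xi>. ennreal (g \<xi>) \<partial>M) \<le> ennreal b"
    and "0 \<le> A" "0 \<le> b" "0 \<le> B"
    and "\<And>\<xi>. \<xi> \<in> space M \<Longrightarrow> h \<xi> \<le> A * g \<xi> + B"
  shows "(\<integral>\<^sup>+\<xi>. ennreal (h \<xi>) \<partial>M) \<le> ennreal (A * b + B)"
  using nn_integral_le_lincomb[where I = "{()}" and A = "\<lambda>_. A" and g = "\<lambda>_. g" and b = "\<lambda>_. b"]
    assms by simp

lemma nn_integral_Llam'_sq_le:
  assumes M: "prob_space M" and u: "u \<in> borel_measurable M"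
    and var: "(\<integral>\<^sup>+\<xi>. ennreal ((u \<xi> - v)\<^sup>2) \<partial>M) \<le> ennreal (\<beta>\<^sup>2)"
    and "\<bar>v - y\<bar> \<le> r"
  shows "(\<integral>\<^sup>+\<xi>. ennreal ((Llam' y (u \<xi>))\<^sup>2) \<partial>M) \<le> ennreal (2 * \<beta>\<^sup>2 + 2 * r\<^sup>2)"
proof -
  have "(\<lambda>\<xi>. (u \<xi> - v)\<^sup>2) \<in> borel_measurable M" using u by measurable
  then show ?thesis
    using Llam'_sq_le[OF assms(4)] by (intro nn_integral_le_affine[OF M _ _ var]) auto
qed

lemma nn_integral_Ly'_sq_le:
  assumes M: "prob_space M" and u: "u \<in> borel_measurable M"
    and var: "(\<integral>\<^sup>+\<xi>. ennreal ((u \<xi> - v)\<^sup>2) \<partial>M) \<le> ennreal (\<beta>\<^sup>2)"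
    and "0 \<le> c" "0 < z" "lam \<in> {0..1}" "\<bar>v - y\<bar> \<le> r"
  shows "(\<integral>\<^sup>+\<xi>. ennreal ((Ly' c y z lam (u \<xi>))\<^sup>2) \<partial>M) \<le> ennreal (12 * c\<^sup>2 / z\<^sup>2 * (\<beta>\<^sup>2 + r\<^sup>2) + 3)"
proof -
  have "(\<lambda>\<xi>. (u \<xi> - v)\<^sup>2) \<in> borel_measurable M" using u by measurable
  then have "(\<integral>\<^sup>+\<xi>. ennreal ((Ly' c y z lam (u \<xi>))\<^sup>2) \<partial>M)
      \<le> ennreal (12 * c\<^sup>2 / z\<^sup>2 * \<beta>\<^sup>2 + (12 * c\<^sup>2 / z\<^sup>2 * r\<^sup>2 + 3))"
    using Ly'_sq_le[OF assms(4-7)]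
    by (intro nn_integral_le_affine[OF M _ _ var]) (auto simp: distrib_left add.assoc)
  then show ?thesis by (simp add: distrib_left add.assoc)
qed

lemma nn_integral_Lz'_sq_le:
  assumes M: "prob_space M" and u: "u \<in> borel_measurable M"
    and moment: "(\<integral>\<^sup>+\<xi>. ennreal (pos_part (u \<xi> - v) ^ 4) \<partial>M) \<le> ennreal (m ^ 4)"
    and "0 \<le> c" "\<bar>v - y\<bar> \<le> r"
  shows "(\<integral>\<^sup>+\<xi>. ennreal ((Lz' c y z (u \<xi>))\<^sup>2) \<partial>M)
    \<le> ennreal (12 * c\<^sup>2 / z ^ 4 * (m ^ 4 + r ^ 4) + 3 * c\<^sup>2 / 16)"
proof -
  have "(\<lambda>\<xi>. pos_part (u \<xi> - v) ^ 4) \<in> borel_measurable M"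
    unfolding pos_part_def using u by measurable
  then have "(\<integral>\<^sup>+\<xi>. ennreal ((Lz' c y z (u \<xi>))\<^sup>2) \<partial>M)
      \<le> ennreal (12 * c\<^sup>2 / z ^ 4 * m ^ 4 + (12 * c\<^sup>2 / z ^ 4 * r ^ 4 + 3 * c\<^sup>2 / 16))"
    using Lz'_sq_le[OF assms(4-5)]
    by (intro nn_integral_le_affine[OF M _ _ moment]) (auto simp: distrib_left add.assoc pos_part_nonneg)
  then show ?thesis by (simp add: distrib_left add.assoc)
qed

lemma nn_integral_Lx'_norm_sq_le:
  fixes W :: "'a \<Rightarrow> 'v::{real_normed_vector, second_countable_topology}"
  assumes M: "prob_space M" and u: "u \<in> borel_measurable M" and W: "W \<in> borel_measurable M"
    and G_moment: "(\<integral>\<^sup>+\<xi>. ennreal ((norm (Gprime (u \<xi>) v (W \<xi>) w))\<^sup>2) \<partial>M) \<le> ennreal (L_G\<^sup>2)"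
    and var: "(\<integral>\<^sup>+\<xi>. ennreal ((u \<xi> - v)\<^sup>2) \<partial>M) \<le> ennreal (\<beta>\<^sup>2)"
    and W_var: "(\<integral>\<^sup>+\<xi>. ennreal ((norm (W \<xi> - w))\<^sup>2) \<partial>M) \<le> ennreal (\<sigma>\<^sup>2)"
    and "0 \<le> c" "0 < z" "lam \<in> {0..1}" "\<bar>v - y\<bar> \<le> r" "norm w \<le> L"
  shows "(\<integral>\<^sup>+\<xi>. ennreal ((norm (Lx' c y z lam (u \<xi>) (W \<xi>)))\<^sup>2) \<partial>M)
    \<le> ennreal (3 * c\<^sup>2 / z\<^sup>2 * (L_G\<^sup>2 + 4 * L\<^sup>2 * \<beta>\<^sup>2 + 16 * (L\<^sup>2 + \<sigma>\<^sup>2) * r\<^sup>2)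
               + 12 * (L\<^sup>2 + \<sigma>\<^sup>2))"
proof -
  let ?k = "3 * c\<^sup>2 / z\<^sup>2"
  define A where "A = (!) [?k, ?k * 4 * L\<^sup>2, ?k * 16 * r\<^sup>2 + 12]"
  define g where "g = (!) [\<lambda>\<xi>. (norm (Gprime (u \<xi>) v (W \<xi>) w))\<^sup>2, \<lambda>\<xi>. (u \<xi> - v)\<^sup>2,
                           \<lambda>\<xi>. (norm (W \<xi> - w))\<^sup>2]"
  define b where "b = (!) [L_G\<^sup>2, \<beta>\<^sup>2, \<sigma>\<^sup>2]"
  have "(norm (Lx' c y z lam (u \<xi>) (W \<xi>)))\<^sup>2
      \<le> (\<Sum>i\<in>{0, 1, 2}. A i * g i \<xi>) + (?k * 16 * r\<^sup>2 + 12) * L\<^sup>2" for \<xi>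
    using Lx'_norm_sq_le[OF assms(7-11), of "u \<xi>" "W \<xi>"] by (simp add: A_def g_def algebra_simps)
  moreover have "(\<lambda>\<xi>. (norm (Gprime (u \<xi>) v (W \<xi>) w))\<^sup>2) \<in> borel_measurable M"
    unfolding Gprime_def pos_part_def using u W by measurable
  moreover have "(\<lambda>\<xi>. (u \<xi> - v)\<^sup>2) \<in> borel_measurable M" using u by measurable
  moreover have "(\<lambda>\<xi>. (norm (W \<xi> - w))\<^sup>2) \<in> borel_measurable M" using W by measurable
  ultimately have "(\<integral>\<^sup>+\<xi>. ennreal ((norm (Lx' c y z lam (u \<xi>) (W \<xi>)))\<^sup>2) \<partial>M)
      \<le> ennreal ((\<Sum>i\<in>{0, 1, 2}. A i * b i) + (?k * 16 * r\<^sup>2 + 12) * L\<^sup>2)"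
    using G_moment var W_var by (intro nn_integral_le_lincomb[OF M, where g = g])
       (auto simp: A_def b_def g_def algebra_simps)
  then show ?thesis by (simp add: A_def b_def algebra_simps)
qed

theorem lemma4:
  fixes M :: "'a measure"
    and X :: "(real ^ 'n) set"
    and F :: "real ^ 'n \<Rightarrow> 'a \<Rightarrow> real"
    and F' :: "real ^ 'n \<Rightarrow> 'a \<Rightarrow> real ^ 'n"
    and f :: "real ^ 'n \<Rightarrow> real"
    and f' :: "real ^ 'n \<Rightarrow> real ^ 'n"
    and D_X c L_f sigma_f beta delta a :: real
    and Y :: "real set"
    and x :: "real ^ 'n" and y z lam :: real
  assumes P: "prob_space M"
    and X: "X \<noteq> {}" "convex X" "compact X"
    and diam: "\<forall>x1\<in>X. \<forall>x2\<in>X. norm (x1 - x2) \<le> D_X"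
    and c: "0 < c" "c \<le> 1"
    and Fconv: "\<forall>\<xi>\<in>space M. convex_on UNIV (\<lambda>u. F u \<xi>)"
    and Fint: "\<forall>u\<in>X. integrable M (F u)"
    and F'int: "\<forall>u\<in>X. integrable M (F' u)"
    and f_def: "\<forall>u\<in>X. f u = (\<integral>\<xi>. F u \<xi> \<partial>M)"
    and f'_def: "\<forall>u\<in>X. f' u = (\<integral>\<xi>. F' u \<xi> \<partial>M)"
    and f'_subgrad: "\<forall>u\<in>X. \<forall>v\<in>X. f v \<ge> f u + inner (f' u) (v - u)"
    and f'_bound: "\<forall>u\<in>X. norm (f' u) \<le> L_f"
    and Lip: "L_f-lipschitz_on X f"
    and sigma: "\<forall>u\<in>X. (\<integral>\<^sup>+\<xi>. ennreal ((norm (F' u \<xi> - f' u))\<^sup>2) \<partial>M) \<le> ennreal (sigma_f\<^sup>2)"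
    and beta: "\<forall>u\<in>X. (\<integral>\<^sup>+\<xi>. ennreal ((F u \<xi> - f u)\<^sup>2) \<partial>M) \<le> ennreal (beta\<^sup>2)"
    and delta: "delta > 0"
    and Y: "Y = {a .. a + 2 * (L_f * D_X + delta)}"
    and fY: "\<forall>u\<in>X. f u \<in> Y"
    and x: "x \<in> X" and y: "y \<in> Y" and z: "z > 0" and lam: "lam \<in> {0..1}"
  shows
    "(\<integral>\<^sup>+\<xi>. ennreal ((Ly' c y z lam (F x \<xi>))\<^sup>2) \<partial>M)
        \<le> ennreal (12 * c\<^sup>2 / z\<^sup>2 * (beta\<^sup>2 + 4 * (L_f * D_X + delta)\<^sup>2) + 3)
     \<and> (\<integral>\<^sup>+\<xi>. ennreal ((Llam' y (F x \<xi>))\<^sup>2) \<partial>M)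
        \<le> ennreal (2 * beta\<^sup>2 + 8 * (L_f * D_X + delta)\<^sup>2)
     \<and> (\<forall>M_f::real.
          (\<forall>u\<in>X. (\<integral>\<^sup>+\<xi>. ennreal ((pos_part (F u \<xi> - f u)) ^ 4) \<partial>M) \<le> ennreal (M_f ^ 4))
          \<longrightarrow> (\<integral>\<^sup>+\<xi>. ennreal ((Lz' c y z (F x \<xi>))\<^sup>2) \<partial>M)
              \<le> ennreal (12 * c\<^sup>2 / z ^ 4 * (M_f ^ 4 + 16 * (L_f * D_X + delta) ^ 4) + 3 * c\<^sup>2 / 16))
     \<and> (\<forall>L_G::real.
          (\<forall>u\<in>X. (\<integral>\<^sup>+\<xi>. ennreal ((norm (Gprime (F u \<xi>) (f u) (F' u \<xi>) (f' u)))\<^sup>2) \<partial>M)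
                   \<le> ennreal (L_G\<^sup>2))
          \<longrightarrow> (\<integral>\<^sup>+\<xi>. ennreal ((norm (Lx' c y z lam (F x \<xi>) (F' x \<xi>)))\<^sup>2) \<partial>M)
              \<le> ennreal (3 * c\<^sup>2 / z\<^sup>2 * (L_G\<^sup>2 + 4 * L_f\<^sup>2 * beta\<^sup>2
                          + 64 * (L_f\<^sup>2 + sigma_f\<^sup>2) * (L_f * D_X + delta)\<^sup>2)
                        + 12 * (L_f\<^sup>2 + sigma_f\<^sup>2)))"
proof -
  define K where "K = L_f * D_X + delta"
  have fy: "\<bar>f x - y\<bar> \<le> 2 * K" using fY x y unfolding Y K_def by auto
  have u: "F x \<in> borel_measurable M" using Fint x by (simp add: borel_measurable_integrable)
  have W: "F' x \<in> borel_measurable M" using F'int x by (simp add: borel_measurable_integrable)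
  have var: "(\<integral>\<^sup>+\<xi>. ennreal ((F x \<xi> - f x)\<^sup>2) \<partial>M) \<le> ennreal (beta\<^sup>2)" using beta x by blast
  have W_var: "(\<integral>\<^sup>+\<xi>. ennreal ((norm (F' x \<xi> - f' x))\<^sup>2) \<partial>M) \<le> ennreal (sigma_f\<^sup>2)"
    using sigma x by blast
  have "0 \<le> c" "norm (f' x) \<le> L_f" using c f'_bound x by auto
  note bounds = nn_integral_Ly'_sq_le[OF P u var \<open>0 \<le> c\<close> z lam fy]
    nn_integral_Llam'_sq_le[OF P u var fy]
    nn_integral_Lz'_sq_le[OF P u _ \<open>0 \<le> c\<close> fy]
    nn_integral_Lx'_norm_sq_le[OF P u W _ var W_var \<open>0 \<le> c\<close> z lam fy \<open>norm (f' x) \<le> L_f\<close>]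
  show ?thesis
    using bounds x unfolding K_def[symmetric] by (auto simp: power_mult_distrib ring_distribs mult_ac)
qed

end
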